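(* There exists a divergent series of positive real terms $\sum_{n=1}^{\infty}y_n$ with $\lim_{n\to\infty}y_n=0$ such that $\{\sum_{n=1}^{\infty}(y_n-y_{\tau(n)}) : \tau\in S_\infty,\ \text{the series converges}\}=\mathbb{R}$.
   Context: $S_\infty$ denotes the set of all permutations of $\mathbb{N}$. *)

theory Defs
  imports "HOL-Analysis.Analysis"
begin

end

theory Submission
  imports Defs "HOL-Real_Asymp.Real_Asymp"
begin

text \<open>
  Interleave heavy terms \<open>1 / sqrt (k + 1)\<close> (even positions) with light terms \<open>2\<^sup>-\<^sup>k\<close>
  (odd positions). For \<open>c > 0\<close>, let \<open>\<tau>\<close> swap the heavy term \<open>k\<close> with the light term
  \<open>p k = k + \<lfloor>c sqrt k\<rfloor>\<close>. The \<open>N\<close>-th partial sum of \<open>\<Sum> (y n - y (\<tau> n))\<close> is the sum over the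
  pairs that straddle \<open>N\<close>; there are about \<open>c sqrt (N/2)\<close> of them, each heavy term is about
  \<open>1 / sqrt (N/2)\<close>, so the heavy part tends to \<open>c\<close>, while the light part is a geometric tail.
  Swapping instead the light term \<open>k\<close> with the heavy term \<open>p k + 1\<close> gives \<open>-c\<close>.
\<close>

definition pair_swap :: "(nat \<Rightarrow> nat) \<Rightarrow> (nat \<Rightarrow> nat) \<Rightarrow> nat \<Rightarrow> nat" where
  "pair_swap a b n =
     (if n \<in> range a then b (inv a n) else if n \<in> range b then a (inv b n) else n)"

context
  fixes a b :: "nat \<Rightarrow> nat"
  assumes inj_a: "inj a" and inj_b: "inj b" and disjoint: "range a \<inter> range b = {}"
begin

lemma pair_swap_left [simp]: "pair_swap a b (a k) = b k"
  using inj_a by (simp add: pair_swap_def)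

lemma pair_swap_right [simp]: "pair_swap a b (b k) = a k"
  using inj_b disjoint by (auto simp: pair_swap_def)

lemma pair_swap_other: "n \<notin> range a \<Longrightarrow> n \<notin> range b \<Longrightarrow> pair_swap a b n = n"
  by (simp add: pair_swap_def)

lemma pair_swap_pair_swap [simp]: "pair_swap a b (pair_swap a b n) = n"
  by (cases "n \<in> range a"; cases "n \<in> range b") (auto simp: pair_swap_other)

lemma bij_pair_swap: "bij (pair_swap a b)"
  by (rule o_bij[of "pair_swap a b"]) (auto simp: fun_eq_iff)

lemma sum_diff_pair_swap:
  fixes y :: "nat \<Rightarrow> 'a::ab_group_add"
  assumes below: "\<And>k. a k < b k"
  shows "(\<Sum>n<N. y n - y (pair_swap a b n)) = (\<Sum>k | a k < N \<and> N \<le> b k. y (a k) - y (b k))"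
proof -
  let ?\<tau> = "pair_swap a b" and ?K = "{k. a k < N \<and> N \<le> b k}"
  have fin: "finite ?K"
    by (rule finite_subset[of _ "a -` {..<N}"]) (auto intro: finite_vimageI inj_a)
  have "?\<tau> ` {..<N} = {m. ?\<tau> m < N}"
  proof (intro set_eqI iffI)
    fix m
    assume "m \<in> {m. ?\<tau> m < N}"
    then show "m \<in> ?\<tau> ` {..<N}"
      by (intro image_eqI[of _ _ "?\<tau> m"]) simp_all
  qed auto
  also have "\<dots> = ({..<N} - a ` ?K) \<union> b ` ?K"
  proof (intro set_eqI)
    fix m
    consider k where "m = a k" | k where "m = b k" | "m \<notin> range a" "m \<notin> range b"
      by blast
    then show "m \<in> {m. ?\<tau> m < N} \<longleftrightarrow> m \<in> ({..<N} - a ` ?K) \<union> b ` ?K"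
    proof cases
      case 1
      moreover have "a k \<notin> b ` ?K"
        using disjoint by blast
      ultimately show ?thesis
        using below[of k] inj_a by (auto simp: inj_image_mem_iff)
    next
      case 2
      moreover have "b k \<notin> a ` ?K"
        using disjoint by blast
      ultimately show ?thesis
        using below[of k] inj_b by (auto simp: inj_image_mem_iff)
    next
      case 3
      then show ?thesis
        by (auto simp: pair_swap_other)
    qed
  qed
  finally have image: "?\<tau> ` {..<N} = ({..<N} - a ` ?K) \<union> b ` ?K" .
  have "(\<Sum>n<N. y (?\<tau> n)) = sum y (?\<tau> ` {..<N})"
    by (simp add: sum.reindex inj_on_subset[OF bij_is_inj[OF bij_pair_swap]])
  also have "\<dots> = sum y {..<N} - sum y (a ` ?K) + sum y (b ` ?K)"
    unfolding image using fin
    by (subst sum.union_disjoint) (auto simp: sum_diff[of "{..<N}" "a ` ?K"] image_subset_iff)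
  finally show ?thesis
    using inj_a inj_b fin
    by (simp add: sum_subtractf sum.reindex inj_on_subset algebra_simps)
qed

end

lemma nat_set_real_interval: "{k::nat. a \<le> real k \<and> real k < b} = {nat \<lceil>a\<rceil>..<nat \<lceil>b\<rceil>}"
  by (auto simp: nat_le_iff ceiling_le_iff zless_nat_eq_int_zless less_ceiling_iff)

lemma card_nat_real_interval_lower:
  assumes "0 \<le> a"
  shows "b - a - 1 \<le> real (card {k::nat. a \<le> real k \<and> real k < b})"
proof -
  have "b \<le> real (nat \<lceil>b\<rceil>)" "real (nat \<lceil>a\<rceil>) < a + 1"
    using assms ceiling_correct[of a] ceiling_correct[of b] by linarith+
  then show ?thesis
    unfolding nat_set_real_interval by simp
qed

lemma card_nat_real_interval_upper:
  assumes "a \<le> b"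
  shows "real (card {k::nat. a \<le> real k \<and> real k < b}) \<le> b - a + 1"
  using assms ceiling_correct[of a] ceiling_correct[of b]
  unfolding nat_set_real_interval by simp linarith

lemma sum_power_le_tail:
  fixes x :: real
  assumes "0 \<le> x" "x < 1" "finite F" "\<And>j. j \<in> F \<Longrightarrow> J \<le> j"
  shows "(\<Sum>j\<in>F. x ^ j) \<le> x ^ J / (1 - x)"
proof -
  have "(\<Sum>j\<in>F. x ^ j) = x ^ J * (\<Sum>i\<in>(\<lambda>j. j - J) ` F. x ^ i)"
    by (subst sum.reindex)
      (auto simp: inj_on_def sum_distrib_left power_add[symmetric] intro!: sum.cong dest!: assms(4))
  also have "(\<Sum>i\<in>(\<lambda>j. j - J) ` F. x ^ i) \<le> (\<Sum>i. x ^ i)"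
    using assms by (intro sum_le_suminf) auto
  also have "(\<Sum>i. x ^ i) = 1 / (1 - x)"
    using assms by (intro suminf_geometric) simp
  finally show ?thesis
    using assms by (simp add: mult_left_mono)
qed

lemma sum_power_le_tail_powr:
  fixes x :: real
  assumes "0 < x" "x < 1" "finite F" "\<And>j. j \<in> F \<Longrightarrow> t \<le> real j"
  shows "(\<Sum>j\<in>F. x ^ j) \<le> x powr t / (1 - x)"
proof -
  have "(\<Sum>j\<in>F. x ^ j) \<le> x ^ nat \<lceil>t\<rceil> / (1 - x)"
    using assms by (intro sum_power_le_tail) (auto simp: nat_le_iff ceiling_le_iff)
  also have "x ^ nat \<lceil>t\<rceil> = x powr real (nat \<lceil>t\<rceil>)"
    using assms by (simp add: powr_realpow)
  also have "\<dots> \<le> x powr t"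
    using assms by (intro powr_mono') linarith+
  finally show ?thesis
    using assms by (simp add: divide_right_mono)
qed

lemma sqrt_diff_le_sqrt:
  fixes x c k :: real
  assumes "0 \<le> x" "0 \<le> c" "x - c * sqrt x + c\<^sup>2 \<le> k"
  shows "sqrt x - c \<le> sqrt k"
proof -
  have "(sqrt x - c)\<^sup>2 = x - 2 * c * sqrt x + c\<^sup>2"
    using assms by (simp add: power2_eq_square algebra_simps)
  also have "\<dots> \<le> k"
    using assms(3) mult_nonneg_nonneg[OF assms(2) real_sqrt_ge_zero[OF assms(1)]] by linarith
  finally have "sqrt ((sqrt x - c)\<^sup>2) \<le> sqrt k"
    by (rule real_sqrt_le_mono)
  then show ?thesis
    by simp
qed

definition heavy :: "nat \<Rightarrow> real" where
  "heavy k = 1 / sqrt (real k + 1)"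

definition light :: "nat \<Rightarrow> real" where
  "light k = (1 / 2) ^ k"

definition y_seq :: "nat \<Rightarrow> real" where
  "y_seq n = (if even n then heavy (n div 2) else light (n div 2))"

definition partner :: "real \<Rightarrow> nat \<Rightarrow> nat" where
  "partner c k = k + nat \<lfloor>c * sqrt (real k)\<rfloor>"

definition window :: "real \<Rightarrow> nat \<Rightarrow> nat set" where
  "window c N = {k. 2 * k < N \<and> N \<le> 2 * partner c k + 1}"

lemma le_partner: "k \<le> partner c k"
  by (simp add: partner_def)

lemma strict_mono_partner: "0 \<le> c \<Longrightarrow> strict_mono (partner c)"
  unfolding strict_mono_def partner_def
  by (auto intro!: add_less_le_mono nat_mono floor_mono mult_left_mono)

lemma partner_bounds:
  assumes "0 \<le> c"
  shows "real k + c * sqrt (real k) - 1 < real (partner c k)"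
    and "real (partner c k) \<le> real k + c * sqrt (real k)"
  using assms by (auto simp: partner_def)

lemma finite_window: "finite (window c N)"
  by (rule finite_subset[of _ "{..<N}"]) (auto simp: window_def)

lemma mem_window_bounds:
  assumes "0 \<le> c" "k \<in> window c N"
  defines "x \<equiv> real N / 2"
  shows "x - 1 / 2 - c * sqrt x \<le> real k" "real k < x"
    and "x - 1 / 2 \<le> real (partner c k)" "real (partner c k) \<le> x + c * sqrt x"
proof -
  from assms(2) have k: "2 * k < N" "N \<le> 2 * partner c k + 1"
    by (auto simp: window_def)
  then show k_less: "real k < x" "x - 1 / 2 \<le> real (partner c k)"
    unfolding x_def by linarith+
  have "c * sqrt (real k) \<le> c * sqrt x"
    using k_less assms(1) by (intro mult_left_mono) auto
  then show "real (partner c k) \<le> x + c * sqrt x" "x - 1 / 2 - c * sqrt x \<le> real k"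
    using partner_bounds(2)[OF assms(1), of k] k_less by linarith+
qed

lemma real_interval_subset_window:
  fixes N :: nat
  assumes "0 \<le> c"
  defines "x \<equiv> real N / 2"
  shows "{k. x - c * sqrt x + c\<^sup>2 + 1 \<le> real k \<and> real k < x} \<subseteq> window c N"
proof safe
  fix k
  assume k: "x - c * sqrt x + c\<^sup>2 + 1 \<le> real k" "real k < x"
  have "sqrt x - c \<le> sqrt (real k)"
    using k assms(1) by (intro sqrt_diff_le_sqrt) (auto simp: x_def)
  then have "c * (sqrt x - c) \<le> c * sqrt (real k)"
    using assms(1) by (rule mult_left_mono)
  then have "x < real (partner c k) + 1 / 2"
    using partner_bounds(1)[OF assms(1), of k] k by (simp add: algebra_simps power2_eq_square)
  then show "k \<in> window c N"
    using k unfolding window_def x_def by simp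
qed

lemma card_window_bounds:
  fixes N :: nat
  assumes "0 \<le> c"
  defines "x \<equiv> real N / 2"
  shows "c * sqrt x - c\<^sup>2 - 2 \<le> real (card (window c N))"
    and "real (card (window c N)) \<le> c * sqrt x + 3 / 2"
proof -
  have "0 \<le> c * sqrt x"
    using assms(1) by (simp add: x_def)
  have "0 \<le> x - c * sqrt x + c\<^sup>2"
  proof -
    have "x - c * sqrt x + c\<^sup>2 = (sqrt x - c / 2)\<^sup>2 + 3 / 4 * c\<^sup>2"
      by (simp add: x_def power2_eq_square algebra_simps)
    then show ?thesis
      by simp
  qed
  then have "x - (x - c * sqrt x + c\<^sup>2 + 1) - 1
      \<le> real (card {k. x - c * sqrt x + c\<^sup>2 + 1 \<le> real k \<and> real k < x})"
    by (intro card_nat_real_interval_lower) simp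
  also have "\<dots> \<le> real (card (window c N))"
    using real_interval_subset_window[OF assms(1), of N] finite_window
    by (simp add: x_def card_mono)
  finally show "c * sqrt x - c\<^sup>2 - 2 \<le> real (card (window c N))"
    by simp
  have "window c N \<subseteq> {k. x - 1 / 2 - c * sqrt x \<le> real k \<and> real k < x}"
    using mem_window_bounds[OF assms(1)] by (auto simp: x_def)
  then have "real (card (window c N))
      \<le> real (card {k. x - 1 / 2 - c * sqrt x \<le> real k \<and> real k < x})"
    by (intro of_nat_mono card_mono) (simp_all add: nat_set_real_interval)
  also have "\<dots> \<le> c * sqrt x + 3 / 2"
    using \<open>0 \<le> c * sqrt x\<close> by (intro order_trans[OF card_nat_real_interval_upper]) auto
  finally show "real (card (window c N)) \<le> c * sqrt x + 3 / 2" .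
qed

lemma mem_window_abs_bounds:
  assumes "0 \<le> c" "k \<in> window c N"
  defines "x \<equiv> real N / 2"
  shows "\<bar>real k - x\<bar> \<le> c * sqrt x + 2"
    and "\<bar>real (partner c k) - x\<bar> \<le> c * sqrt x + 2"
    and "\<bar>real (partner c k + 1) - x\<bar> \<le> c * sqrt x + 2"
proof -
  have "0 \<le> c * sqrt x"
    using assms(1) by (simp add: x_def)
  then show "\<bar>real k - x\<bar> \<le> c * sqrt x + 2"
    and "\<bar>real (partner c k) - x\<bar> \<le> c * sqrt x + 2"
    and "\<bar>real (partner c k + 1) - x\<bar> \<le> c * sqrt x + 2"
    using mem_window_bounds[OF assms(1,2)] by (auto simp: x_def abs_le_iff)
qed

lemma heavy_window_sum_tendsto:
  assumes c: "0 < c"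
    and close: "\<And>N k. k \<in> window c N \<Longrightarrow> \<bar>real (g k) - real N / 2\<bar> \<le> c * sqrt (real N / 2) + 2"
  shows "(\<lambda>N. \<Sum>k\<in>window c N. heavy (g k)) \<longlonglongrightarrow> c"
proof -
  define lower where "lower N =
    (c * sqrt (real N / 2) - c\<^sup>2 - 2) / sqrt (real N / 2 + c * sqrt (real N / 2) + 3)" for N :: nat
  define upper where "upper N =
    (c * sqrt (real N / 2) + 3 / 2) / sqrt (real N / 2 - c * sqrt (real N / 2) - 1)" for N :: nat
  have lower_le: "lower N \<le> (\<Sum>k\<in>window c N. heavy (g k))" for N
  proof -
    let ?x = "real N / 2"
    have "lower N \<le> real (card (window c N)) / sqrt (?x + c * sqrt ?x + 3)"
      unfolding lower_def using c card_window_bounds(1)[of c N]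
      by (intro divide_right_mono) auto
    also have "\<dots> = (\<Sum>k\<in>window c N. 1 / sqrt (?x + c * sqrt ?x + 3))"
      by simp
    also have "\<dots> \<le> (\<Sum>k\<in>window c N. heavy (g k))"
    proof (rule sum_mono)
      fix k
      assume "k \<in> window c N"
      then have "real (g k) + 1 \<le> ?x + c * sqrt ?x + 3"
        using close[of k N] by linarith
      then show "1 / sqrt (?x + c * sqrt ?x + 3) \<le> heavy (g k)"
        unfolding heavy_def by (intro divide_left_mono) auto
    qed
    finally show ?thesis .
  qed
  have le_upper: "\<forall>\<^sub>F N in sequentially. (\<Sum>k\<in>window c N. heavy (g k)) \<le> upper N"
  proof -
    have "\<forall>\<^sub>F N in sequentially. 0 < real N / 2 - c * sqrt (real N / 2) - 1"
      using c by real_asymp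
    then show ?thesis
    proof eventually_elim
      case (elim N)
      let ?x = "real N / 2"
      have "(\<Sum>k\<in>window c N. heavy (g k)) \<le> (\<Sum>k\<in>window c N. 1 / sqrt (?x - c * sqrt ?x - 1))"
      proof (rule sum_mono)
        fix k
        assume "k \<in> window c N"
        then have "?x - c * sqrt ?x - 1 \<le> real (g k) + 1"
          using close[of k N] by linarith
        then show "heavy (g k) \<le> 1 / sqrt (?x - c * sqrt ?x - 1)"
          unfolding heavy_def using elim by (intro divide_left_mono) auto
      qed
      also have "\<dots> = real (card (window c N)) / sqrt (?x - c * sqrt ?x - 1)"
        by simp
      also have "\<dots> \<le> upper N"
        unfolding upper_def using c elim card_window_bounds(2)[of c N]
        by (intro divide_right_mono) auto
      finally show ?case .
    qed
  qed
  have lower_ev: "\<forall>\<^sub>F N in sequentially. lower N \<le> (\<Sum>k\<in>window c N. heavy (g k))"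
    by (intro always_eventually allI lower_le)
  have lim: "lower \<longlonglongrightarrow> c" "upper \<longlonglongrightarrow> c"
    unfolding lower_def upper_def using c by real_asymp+
  show ?thesis
    using lower_ev le_upper lim by (rule tendsto_sandwich)
qed

lemma light_window_sum_tendsto:
  assumes c: "0 < c" and "inj g"
    and close: "\<And>N k. k \<in> window c N \<Longrightarrow> \<bar>real (g k) - real N / 2\<bar> \<le> c * sqrt (real N / 2) + 2"
  shows "(\<lambda>N. \<Sum>k\<in>window c N. light (g k)) \<longlonglongrightarrow> 0"
proof (rule tendsto_sandwich[OF _ _ tendsto_const])
  show "\<forall>\<^sub>F N in sequentially. 0 \<le> (\<Sum>k\<in>window c N. light (g k))"
    by (simp add: light_def sum_nonneg)
  have "(\<Sum>k\<in>window c N. light (g k)) \<le> 2 * (1 / 2) powr (real N / 2 - c * sqrt (real N / 2) - 2)"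
    for N
  proof -
    have "(\<Sum>k\<in>window c N. light (g k)) = (\<Sum>j\<in>g ` window c N. (1 / 2) ^ j)"
      using \<open>inj g\<close> by (simp add: sum.reindex inj_on_subset light_def)
    also have "\<dots> \<le> (1 / 2) powr (real N / 2 - c * sqrt (real N / 2) - 2) / (1 - 1 / 2)"
    proof (rule sum_power_le_tail_powr)
      fix j
      assume "j \<in> g ` window c N"
      then show "real N / 2 - c * sqrt (real N / 2) - 2 \<le> real j"
        using close by (force simp: abs_le_iff)
    qed (simp_all add: finite_window)
    finally show ?thesis
      by simp
  qed
  then show "\<forall>\<^sub>F N in sequentially.
      (\<Sum>k\<in>window c N. light (g k)) \<le> 2 * (1 / 2) powr (real N / 2 - c * sqrt (real N / 2) - 2)"
    by simp
  show "(\<lambda>N. 2 * (1 / 2) powr (real N / 2 - c * sqrt (real N / 2) - 2)) \<longlonglongrightarrow> 0"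
    using c by real_asymp
qed

lemma y_seq_sums_pos:
  assumes c: "0 < c"
  shows "\<exists>\<tau>. bij \<tau> \<and> (\<lambda>n. y_seq n - y_seq (\<tau> n)) sums c"
proof -
  define a b where "a k = 2 * k" and "b k = 2 * partner c k + 1" for k :: nat
  have inj_partner: "inj (partner c)"
    using strict_mono_partner c by (simp add: strict_mono_imp_inj_on)
  have swap: "inj a" "inj b" "range a \<inter> range b = {}"
    using inj_partner by (auto simp: a_def b_def inj_on_def) presburger
  have below: "a k < b k" for k
    using le_partner[of k c] by (simp add: a_def b_def)
  have "(\<Sum>n<N. y_seq n - y_seq (pair_swap a b n))
      = (\<Sum>k\<in>window c N. heavy k - light (partner c k))" for N
    by (simp only: sum_diff_pair_swap[OF swap below]) (simp add: window_def y_seq_def a_def b_def)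
  moreover have "(\<lambda>N. \<Sum>k\<in>window c N. heavy k - light (partner c k)) \<longlonglongrightarrow> c - 0"
    unfolding sum_subtractf using c mem_window_abs_bounds(1,2)
    by (intro tendsto_diff heavy_window_sum_tendsto[where g = id, simplified]
        light_window_sum_tendsto[OF c inj_partner]) auto
  ultimately have "(\<lambda>n. y_seq n - y_seq (pair_swap a b n)) sums c"
    by (simp add: sums_def)
  then show ?thesis
    using bij_pair_swap[OF swap] by blast
qed

lemma y_seq_sums_neg:
  assumes c: "0 < c"
  shows "\<exists>\<tau>. bij \<tau> \<and> (\<lambda>n. y_seq n - y_seq (\<tau> n)) sums (- c)"
proof -
  define a b where "a k = 2 * k + 1" and "b k = 2 * partner c k + 2" for k :: nat
  have inj_partner: "inj (partner c)"
    using strict_mono_partner c by (simp add: strict_mono_imp_inj_on)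
  have swap: "inj a" "inj b" "range a \<inter> range b = {}"
    using inj_partner by (auto simp: a_def b_def inj_on_def) presburger
  have below: "a k < b k" for k
    using le_partner[of k c] by (simp add: a_def b_def)
  \<comment> \<open>the pairs straddling \<open>N + 1\<close> are those indexed by \<open>window c N\<close>\<close>
  have "(\<Sum>n<Suc N. y_seq n - y_seq (pair_swap a b n))
      = (\<Sum>k\<in>window c N. light k - heavy (partner c k + 1))" for N
    by (simp only: sum_diff_pair_swap[OF swap below]) (simp add: window_def y_seq_def a_def b_def)
  moreover have "(\<lambda>N. \<Sum>k\<in>window c N. light k - heavy (partner c k + 1)) \<longlonglongrightarrow> 0 - c"
    unfolding sum_subtractf using c mem_window_abs_bounds(1,3)
    by (intro tendsto_diff heavy_window_sum_tendsto
        light_window_sum_tendsto[OF c inj_on_id, simplified]) auto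
  ultimately have "(\<lambda>n. y_seq n - y_seq (pair_swap a b n)) sums (- c)"
    unfolding sums_def by (subst filterlim_sequentially_Suc[symmetric]) simp
  then show ?thesis
    using bij_pair_swap[OF swap] by blast
qed

lemma light_le_heavy: "light k \<le> heavy k"
proof -
  have "sqrt (real k + 1) \<le> real k + 1"
    by (intro real_le_lsqrt) (auto simp: power2_eq_square)
  also have "real k + 1 \<le> 2 ^ k"
    using less_exp[of k]
    by (metis Suc_leI of_nat_Suc of_nat_le_iff of_nat_numeral of_nat_power add.commute)
  finally show ?thesis
    by (simp add: light_def heavy_def power_divide frac_le)
qed

lemma y_seq_pos: "0 < y_seq n"
  by (simp add: y_seq_def heavy_def light_def)

lemma y_seq_tendsto_zero: "y_seq \<longlonglongrightarrow> 0"
proof (rule tendsto_sandwich[OF _ _ tendsto_const])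
  show "\<forall>\<^sub>F n in sequentially. 0 \<le> y_seq n"
    using y_seq_pos by (simp add: less_imp_le)
  have "y_seq n \<le> 1 / sqrt (real n / 2 + 1 / 2)" for n
  proof -
    have "y_seq n \<le> heavy (n div 2)"
      using light_le_heavy by (simp add: y_seq_def)
    also have "\<dots> \<le> 1 / sqrt (real n / 2 + 1 / 2)"
    proof -
      have "real n / 2 + 1 / 2 \<le> real (n div 2) + 1"
        by linarith
      then show ?thesis
        by (simp add: heavy_def frac_le)
    qed
    finally show ?thesis .
  qed
  then show "\<forall>\<^sub>F n in sequentially. y_seq n \<le> 1 / sqrt (real n / 2 + 1 / 2)"
    by simp
  show "(\<lambda>n. 1 / sqrt (real n / 2 + 1 / 2)) \<longlonglongrightarrow> 0"
    by real_asymp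
qed

lemma not_summable_y_seq: "\<not> summable y_seq"
proof
  assume "summable y_seq"
  then have "summable (\<lambda>n. sum y_seq {n * 2..<n * 2 + 2})"
    using sums_group[of y_seq _ 2] by (auto simp: summable_def)
  moreover have "norm (inverse (real (Suc n))) \<le> sum y_seq {n * 2..<n * 2 + 2}" for n
  proof -
    have "inverse (real (Suc n)) \<le> heavy n"
      using real_le_lsqrt[of "real n + 1" "real n + 1"]
      by (simp add: heavy_def inverse_eq_divide frac_le power2_eq_square add.commute)
    also have "\<dots> \<le> heavy n + light n"
      by (simp add: light_def)
    also have "\<dots> = y_seq (2 * n) + y_seq (2 * n + 1)"
      by (simp add: y_seq_def)
    also have "\<dots> = sum y_seq {n * 2..<n * 2 + 2}"
      by (simp add: numeral_2_eq_2 mult.commute)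
    finally show ?thesis
      by simp
  qed
  ultimately have "summable (\<lambda>n. inverse (real (Suc n)))"
    by (rule summable_comparison_test'[where N = 0])
  then show False
    using not_summable_harmonic[where 'a = real] summable_Suc_iff[of "\<lambda>n. inverse (real n)"] by simp
qed

theorem mainTheorem6:
  shows "\<exists>y :: nat \<Rightarrow> real.
           (\<forall>n. y n > 0) \<and> \<not> summable y \<and> y \<longlonglongrightarrow> 0 \<and>
           {s. \<exists>\<tau> :: nat \<Rightarrow> nat. bij \<tau> \<and> (\<lambda>n. y n - y (\<tau> n)) sums s} = UNIV"
proof (intro exI[of _ y_seq] conjI allI y_seq_pos not_summable_y_seq y_seq_tendsto_zero)
  have "\<exists>\<tau>. bij \<tau> \<and> (\<lambda>n. y_seq n - y_seq (\<tau> n)) sums s" for s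
  proof (cases s "0 :: real" rule: linorder_cases)
    case less
    then show ?thesis
      using y_seq_sums_neg[of "- s"] by simp
  next
    case equal
    then show ?thesis
      by (intro exI[of _ id]) simp
  next
    case greater
    then show ?thesis
      by (rule y_seq_sums_pos)
  qed
  then show "{s. \<exists>\<tau>. bij \<tau> \<and> (\<lambda>n. y_seq n - y_seq (\<tau> n)) sums s} = UNIV"
    by blast
qed

end
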